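(* Let $n\ge2$ and $K\in\mathcal{C}_e^n$. Then for all $u\in S^{n-1}$, $$\rho_{K^{\diamond}}(u)\,c_K(u)=\rho_K(u)\,c_{K^{\diamond}}(u)=1,$$ and $$V(K^{\diamond})=\omega_n\int_{S^{n-1}}\frac{1}{c_K(u)^n}\,du.$$
   Context: For $x,y\in\mathbb{R}^n$ let $[x,y]=\sqrt{|x|^2|y|^2-(x\cdot y)^2}$. $\mathcal{C}_e^n$ is the class of origin-symmetric convex bodies in $\mathbb{R}^n$ that are intersections of closed solid cylinders $C^{-}(u,r)=\{x:[x,u]\le r\}$ ($u\in S^{n-1}$, $r>0$). The sine polar body is $K^{\diamond}=\{x\in\mathbb{R}^n:[x,y]\le1\text{ for all }y\in K\}$ (for $K\in\mathcal{C}_e^n$ one has $K^\diamond\in\mathcal{C}_e^n$). The cylindrical support function of $K\in\mathcal{C}_e^n$ is $c_K(x)=\max_{y\in K}[x,y]$. The radial function is $\rho_K(u)=\max\{\lambda\ge0:\lambda u\in K\}$. $V$ is volume, $\omega_n=\pi^{n/2}/\Gamma(1+n/2)$, and $du$ is the rotation-invariant probability measure on $S^{n-1}$. *)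

theory Defs
  imports "HOL-Analysis.Analysis"
begin

definition sinbr :: "'a::euclidean_space \<Rightarrow> 'a \<Rightarrow> real" where
  "sinbr x y = sqrt ((norm x)^2 * (norm y)^2 - (x \<bullet> y)^2)"

definition cylinder :: "'a::euclidean_space \<Rightarrow> real \<Rightarrow> 'a set" where
  "cylinder u r = {x. sinbr x u \<le> r}"

definition convex_body :: "'a::euclidean_space set \<Rightarrow> bool" where
  "convex_body K \<longleftrightarrow> compact K \<and> convex K \<and> interior K \<noteq> {}"

definition origin_symmetric :: "'a::real_vector set \<Rightarrow> bool" where
  "origin_symmetric K \<longleftrightarrow> (\<forall>x\<in>K. - x \<in> K)"

definition cyl_class :: "'a::euclidean_space set set" where
  "cyl_class = {K. convex_body K \<and> origin_symmetric K \<and>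
     (\<exists>F. F \<subseteq> {(u, r). norm u = 1 \<and> r > 0} \<and>
          K = (\<Inter>(u, r)\<in>F. cylinder u r))}"

definition sine_polar :: "'a::euclidean_space set \<Rightarrow> 'a set" where
  "sine_polar K = {x. \<forall>y\<in>K. sinbr x y \<le> 1}"

definition cyl_support :: "'a::euclidean_space set \<Rightarrow> 'a \<Rightarrow> real" where
  "cyl_support K x = Sup ((\<lambda>y. sinbr x y) ` K)"

definition radial_fun :: "'a::euclidean_space set \<Rightarrow> 'a \<Rightarrow> real" where
  "radial_fun K u = Sup {t::real. t \<ge> 0 \<and> t *\<^sub>R u \<in> K}"

definition omega :: "nat \<Rightarrow> real" where
  "omega n = pi powr (real n / 2) / Gamma (1 + real n / 2)"

text \<open>Rotation-invariant probability measure on the unit sphere, realised as the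
  normalized cone measure: push-forward of the uniform distribution on the unit
  ball under x \<mapsto> x/|x|.\<close>
definition sphere_prob :: "'a::euclidean_space measure" where
  "sphere_prob = distr (uniform_measure lborel (ball 0 1)) borel (\<lambda>x. sgn x)"

end

theory Submission
  imports Defs
begin

text \<open>Since K is bounded and contains a ball around 0, and in dimension n >= 2 every direction
  has an orthogonal one, the cylindrical support function c_K is positively homogeneous,
  continuous and positive away from 0, and the sine polar body is {x. c_K x <= 1}; hence its
  radial function is 1 / c_K. The polar body is again bounded with 0 in its interior, and
  the bipolar identity holds because K is an intersection of cylinders, so the same argument
  applied to the polar body gives the second identity.

  The polar body is the star set {x. |x|^n <= c_K(x/|x|)^(-n)}. In the coordinates
  x |-> (x/|x|, |x|^n) Lebesgue measure becomes the product of the cone measure on directions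
  with Lebesgue measure on [0, oo), so the volume of a star set is the cone-measure integral of
  its radial bound; normalising the cone measure to a probability measure produces the
  factor omega_n.\<close>

section \<open>The sine bracket and the cylindrical support function\<close>

lemma sinbr_nonneg: "0 \<le> sinbr x y"
proof -
  have "\<bar>x \<bullet> y\<bar> \<le> norm x * norm y" by (rule Cauchy_Schwarz_ineq2)
  then have "(x \<bullet> y)\<^sup>2 \<le> (norm x * norm y)\<^sup>2"
    by (metis abs_le_square_iff abs_mult abs_norm_cancel)
  then show ?thesis by (simp add: sinbr_def power_mult_distrib)
qed

lemma sinbr_le_norm_mult: "sinbr x y \<le> norm x * norm y"
proof -
  have "sinbr x y \<le> sqrt ((norm x)\<^sup>2 * (norm y)\<^sup>2)"
    unfolding sinbr_def by (intro real_sqrt_le_mono) simp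
  then show ?thesis by (simp add: real_sqrt_mult)
qed

lemma sinbr_commute: "sinbr x y = sinbr y x"
  unfolding sinbr_def by (simp add: inner_commute mult.commute)

lemma sinbr_scaleR_left: "sinbr (c *\<^sub>R x) y = \<bar>c\<bar> * sinbr x y"
proof -
  have "(norm (c *\<^sub>R x))\<^sup>2 * (norm y)\<^sup>2 - ((c *\<^sub>R x) \<bullet> y)\<^sup>2
        = c\<^sup>2 * ((norm x)\<^sup>2 * (norm y)\<^sup>2 - (x \<bullet> y)\<^sup>2)"
    by (simp add: power_mult_distrib algebra_simps)
  then show ?thesis unfolding sinbr_def by (simp add: real_sqrt_mult)
qed

lemma sinbr_scaleR_right: "sinbr x (c *\<^sub>R y) = \<bar>c\<bar> * sinbr x y"
  using sinbr_scaleR_left[of c y x] by (simp add: sinbr_commute)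

lemma sinbr_orthogonal: "x \<bullet> y = 0 \<Longrightarrow> sinbr x y = norm x * norm y"
  unfolding sinbr_def by (simp add: real_sqrt_mult)

lemma sinbr_0_left [simp]: "sinbr 0 y = 0"
  and sinbr_0_right [simp]: "sinbr x 0 = 0"
  unfolding sinbr_def by simp_all

text \<open>Up to the factor \<open>norm y\<close>, \<open>sinbr x y\<close> is the norm of the component of \<open>x\<close>
  orthogonal to \<open>y\<close>; hence it is a seminorm in \<open>x\<close>.\<close>
lemma sinbr_mult_norm: "sinbr x y * norm y = norm ((y \<bullet> y) *\<^sub>R x - (x \<bullet> y) *\<^sub>R y)"
proof -
  define v where "v = (y \<bullet> y) *\<^sub>R x - (x \<bullet> y) *\<^sub>R y"
  have "v \<bullet> v = (y \<bullet> y) * ((y \<bullet> y) * (x \<bullet> x) - (x \<bullet> y)\<^sup>2)"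
    unfolding v_def
    by (simp add: inner_diff_left inner_diff_right inner_commute algebra_simps power2_eq_square)
  then have "norm v = sqrt ((norm y)\<^sup>2 * ((norm x)\<^sup>2 * (norm y)\<^sup>2 - (x \<bullet> y)\<^sup>2))"
    by (simp add: norm_eq_sqrt_inner power2_norm_eq_inner)
  then show ?thesis unfolding sinbr_def v_def by (simp add: real_sqrt_mult)
qed

lemma sinbr_triangle_left: "sinbr (x + z) y \<le> sinbr x y + sinbr z y"
proof (cases "y = 0")
  case False
  have "sinbr (x + z) y * norm y
      = norm (((y \<bullet> y) *\<^sub>R x - (x \<bullet> y) *\<^sub>R y) + ((y \<bullet> y) *\<^sub>R z - (z \<bullet> y) *\<^sub>R y))"
    unfolding sinbr_mult_norm by (simp add: algebra_simps inner_add_left)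
  also have "\<dots> \<le> sinbr x y * norm y + sinbr z y * norm y"
    unfolding sinbr_mult_norm by (rule norm_triangle_ineq)
  finally show ?thesis using False by (simp add: distrib_right[symmetric])
qed simp

lemma sinbr_le_add_norm_diff: "sinbr x y \<le> sinbr x' y + norm (x - x') * norm y"
  using sinbr_triangle_left[of x' "x - x'" y] sinbr_le_norm_mult[of "x - x'" y] by simp

lemma exists_unit_orthogonal:
  fixes x :: "'a::euclidean_space"
  assumes "DIM('a) \<ge> 2"
  obtains w where "norm w = 1" "x \<bullet> w = 0"
proof -
  have "dim {x} \<le> card {x}" by (rule dim_le_card') simp
  with assms have "dim {x} < DIM('a)" by simp
  then obtain v where v: "v \<noteq> 0" "\<And>y. y \<in> span {x} \<Longrightarrow> orthogonal v y"
    using orthogonal_to_subspace_exists by blast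
  then have "orthogonal v x" by (simp add: span_base)
  then have "x \<bullet> (v /\<^sub>R norm v) = 0" by (simp add: orthogonal_def inner_commute)
  moreover have "norm (v /\<^sub>R norm v) = 1" using v(1) by simp
  ultimately show ?thesis using that by blast
qed

lemma bdd_above_sinbr_image:
  assumes "bounded S"
  shows "bdd_above ((\<lambda>y. sinbr x y) ` S)"
proof -
  obtain R where R: "\<And>y. y \<in> S \<Longrightarrow> norm y \<le> R" using assms bounded_iff by blast
  have "sinbr x y \<le> norm x * R" if "y \<in> S" for y
    using sinbr_le_norm_mult[of x y] R[OF that] mult_left_mono[of "norm y" R "norm x"] by simp
  then show ?thesis by (auto simp: bdd_above_def)
qed

lemma cyl_support_upper: "bounded S \<Longrightarrow> y \<in> S \<Longrightarrow> sinbr x y \<le> cyl_support S x"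
  unfolding cyl_support_def by (rule cSUP_upper) (auto intro: bdd_above_sinbr_image)

lemma cyl_support_least:
  "S \<noteq> {} \<Longrightarrow> (\<And>y. y \<in> S \<Longrightarrow> sinbr x y \<le> b) \<Longrightarrow> cyl_support S x \<le> b"
  unfolding cyl_support_def by (rule cSUP_least) auto

lemma cyl_support_nonneg: "bounded S \<Longrightarrow> S \<noteq> {} \<Longrightarrow> 0 \<le> cyl_support S x"
  using cyl_support_upper[of S _ x] sinbr_nonneg[of x] by (meson equals0I order_trans)

lemma cyl_support_scaleR_le:
  assumes "bounded S" "S \<noteq> {}" "0 \<le> c"
  shows "cyl_support S (c *\<^sub>R x) \<le> c * cyl_support S x"
proof (rule cyl_support_least[OF assms(2)])
  fix y assume "y \<in> S"
  then show "sinbr (c *\<^sub>R x) y \<le> c * cyl_support S x"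
    using cyl_support_upper[OF assms(1)] assms(3) by (simp add: sinbr_scaleR_left mult_left_mono)
qed

lemma cyl_support_scaleR:
  assumes "bounded S" "S \<noteq> {}" "0 \<le> c"
  shows "cyl_support S (c *\<^sub>R x) = c * cyl_support S x"
proof (cases "c = 0")
  case True
  then show ?thesis
    using cyl_support_scaleR_le[OF assms, of x] cyl_support_nonneg[OF assms(1,2), of 0] by simp
next
  case False
  have "cyl_support S x = cyl_support S ((1 / c) *\<^sub>R (c *\<^sub>R x))" using False by simp
  also have "\<dots> \<le> (1 / c) * cyl_support S (c *\<^sub>R x)"
    using assms by (intro cyl_support_scaleR_le) auto
  finally have "c * cyl_support S x \<le> cyl_support S (c *\<^sub>R x)"
    using False assms(3) by (simp add: field_simps)
  with cyl_support_scaleR_le[OF assms, of x] show ?thesis by linarith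
qed

lemma exists_ball_sinbr_eq:
  fixes x :: "'a::euclidean_space"
  assumes "DIM('a) \<ge> 2" "0 < d"
  obtains y where "y \<in> ball 0 d" "sinbr x y = norm x * (d / 2)"
proof -
  obtain w where w: "norm w = 1" "x \<bullet> w = 0" using exists_unit_orthogonal assms(1) by blast
  show ?thesis
    using that[of "(d / 2) *\<^sub>R w"] w assms(2) by (simp add: sinbr_scaleR_right sinbr_orthogonal)
qed

lemma cyl_support_ge_ball:
  fixes S :: "'a::euclidean_space set"
  assumes "DIM('a) \<ge> 2" "bounded S" "ball 0 d \<subseteq> S" "0 < d"
  shows "norm x * (d / 2) \<le> cyl_support S x"
proof -
  obtain y where "y \<in> ball 0 d" "sinbr x y = norm x * (d / 2)"
    using exists_ball_sinbr_eq[OF assms(1,4)] .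
  with assms(3) cyl_support_upper[OF assms(2)] show ?thesis by (metis subsetD)
qed

lemma cyl_support_pos:
  fixes S :: "'a::euclidean_space set"
  assumes "DIM('a) \<ge> 2" "bounded S" "ball 0 d \<subseteq> S" "0 < d" "x \<noteq> 0"
  shows "0 < cyl_support S x"
proof -
  have "0 < norm x * (d / 2)" using assms(4,5) by simp
  also have "\<dots> \<le> cyl_support S x" by (rule cyl_support_ge_ball[OF assms(1-4)])
  finally show ?thesis .
qed

lemma continuous_on_cyl_support:
  assumes "bounded S" "S \<noteq> {}"
  shows "continuous_on UNIV (cyl_support S)"
proof -
  obtain R where R: "0 < R" "\<And>y. y \<in> S \<Longrightarrow> norm y \<le> R"
    using assms(1) bounded_pos by blast
  have le: "cyl_support S x \<le> cyl_support S x' + dist x x' * R" for x x'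
  proof (rule cyl_support_least[OF assms(2)])
    fix z assume z: "z \<in> S"
    have "sinbr x z \<le> sinbr x' z + norm (x - x') * norm z" by (rule sinbr_le_add_norm_diff)
    also have "\<dots> \<le> cyl_support S x' + dist x x' * R"
      using cyl_support_upper[OF assms(1) z, of x'] mult_left_mono[OF R(2)[OF z], of "dist x x'"]
      by (simp add: dist_norm)
    finally show "sinbr x z \<le> cyl_support S x' + dist x x' * R" .
  qed
  have "R-lipschitz_on UNIV (cyl_support S)"
  proof (rule lipschitz_onI)
    fix x y :: 'a
    show "dist (cyl_support S x) (cyl_support S y) \<le> R * dist x y"
      using le[of x y] le[of y x] by (simp add: dist_real_def dist_commute abs_le_iff mult.commute)
  qed (use R(1) in simp)
  then show ?thesis by (rule lipschitz_on_continuous_on)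
qed

section \<open>Sine polar bodies\<close>

lemma mem_sine_polar_iff:
  assumes "bounded S" "S \<noteq> {}"
  shows "x \<in> sine_polar S \<longleftrightarrow> cyl_support S x \<le> 1"
proof
  assume "x \<in> sine_polar S"
  then show "cyl_support S x \<le> 1"
    by (intro cyl_support_least[OF assms(2)]) (simp add: sine_polar_def)
next
  assume "cyl_support S x \<le> 1"
  then have "sinbr x y \<le> 1" if "y \<in> S" for y
    using cyl_support_upper[OF assms(1) that, of x] by linarith
  then show "x \<in> sine_polar S" by (simp add: sine_polar_def)
qed

lemma radial_fun_sine_polar:
  assumes "bounded S" "S \<noteq> {}" "0 < cyl_support S u"
  shows "radial_fun (sine_polar S) u = 1 / cyl_support S u"
proof -
  have "t *\<^sub>R u \<in> sine_polar S \<longleftrightarrow> t \<le> 1 / cyl_support S u" if "0 \<le> t" for t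
    using assms(3) that
    by (simp add: mem_sine_polar_iff[OF assms(1,2)] cyl_support_scaleR[OF assms(1,2)] le_divide_eq)
  then have "{t. 0 \<le> t \<and> t *\<^sub>R u \<in> sine_polar S} = {0..1 / cyl_support S u}"
    by auto
  then show ?thesis
    using assms(3) by (simp add: radial_fun_def)
qed

lemma radial_fun_sine_polar_mult_cyl_support:
  fixes S :: "'a::euclidean_space set"
  assumes "DIM('a) \<ge> 2" "bounded S" "ball 0 d \<subseteq> S" "0 < d" "u \<noteq> 0"
  shows "radial_fun (sine_polar S) u * cyl_support S u = 1"
proof -
  have "S \<noteq> {}" using assms(3,4) by auto
  with cyl_support_pos[OF assms] show ?thesis
    by (simp add: radial_fun_sine_polar[OF assms(2)])
qed

lemma bounded_sine_polar:
  fixes S :: "'a::euclidean_space set"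
  assumes "DIM('a) \<ge> 2" "ball 0 d \<subseteq> S" "0 < d"
  shows "bounded (sine_polar S)"
proof -
  have "norm x \<le> 2 / d" if "x \<in> sine_polar S" for x
  proof -
    obtain y where "y \<in> ball 0 d" "sinbr x y = norm x * (d / 2)"
      using exists_ball_sinbr_eq[OF assms(1,3)] .
    with assms(2) have "y \<in> S" by blast
    with \<open>sinbr x y = norm x * (d / 2)\<close> that have "norm x * (d / 2) \<le> 1"
      by (auto simp: sine_polar_def)
    with assms(3) show ?thesis by (simp add: field_simps)
  qed
  then show ?thesis unfolding bounded_iff by blast
qed

lemma sine_polar_contains_ball:
  assumes "bounded S"
  obtains e where "0 < e" "ball 0 e \<subseteq> sine_polar S"
proof -
  obtain R where R: "0 < R" "\<And>y. y \<in> S \<Longrightarrow> norm y \<le> R"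
    using assms bounded_pos by blast
  have "x \<in> sine_polar S" if "norm x < 1 / R" for x
  proof -
    have "sinbr x y \<le> 1" if "y \<in> S" for y
    proof -
      have "sinbr x y \<le> norm x * R"
        using sinbr_le_norm_mult[of x y] R(2)[OF that] mult_left_mono[of "norm y" R "norm x"] by simp
      also have "\<dots> < 1" using \<open>norm x < 1 / R\<close> R(1) by (simp add: field_simps)
      finally show ?thesis by simp
    qed
    then show ?thesis by (simp add: sine_polar_def)
  qed
  then have "ball 0 (1 / R) \<subseteq> sine_polar S" by auto
  moreover have "0 < 1 / R" using R(1) by simp
  ultimately show ?thesis using that by blast
qed

lemma origin_symmetric_convex_contains_ball:
  fixes K :: "'a::real_normed_vector set"
  assumes cvx: "convex K" and sym: "origin_symmetric K" and "interior K \<noteq> {}"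
  obtains d where "0 < d" "ball 0 d \<subseteq> K"
proof -
  from \<open>interior K \<noteq> {}\<close> obtain a e where e: "0 < e" "ball a e \<subseteq> K"
    by (meson ex_in_conv mem_interior)
  have "z \<in> K" if "z \<in> ball 0 e" for z
  proof -
    have "a + z \<in> K" "a - z \<in> K"
      using e that by (auto simp: dist_norm)
    then have "z - a \<in> K" using sym by (force simp: origin_symmetric_def)
    with cvx \<open>a + z \<in> K\<close> have "(1/2) *\<^sub>R (a + z) + (1/2) *\<^sub>R (z - a) \<in> K"
      by (intro convexD) auto
    moreover have "(1/2) *\<^sub>R (a + z) + (1/2) *\<^sub>R (z - a) = (1/2) *\<^sub>R (z + z)"
      by (simp only: scaleR_right_distrib[symmetric]) simp
    ultimately show ?thesis by simp
  qed
  with e(1) that show ?thesis by blast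
qed

text \<open>A point outside a defining cylinder \<open>cylinder u r\<close> of \<open>K\<close> is separated from \<open>K\<close>
  by the point \<open>(1 / r) *\<^sub>R u\<close> of the polar body.\<close>
lemma sine_polar_sine_polar_cylinders:
  assumes K: "K = (\<Inter>(u, r)\<in>F. cylinder u r)" and F: "\<And>u r. (u, r) \<in> F \<Longrightarrow> 0 < r"
  shows "sine_polar (sine_polar K) = K"
proof
  show "K \<subseteq> sine_polar (sine_polar K)"
    by (auto simp: sine_polar_def sinbr_commute)
  show "sine_polar (sine_polar K) \<subseteq> K"
  proof
    fix x assume x: "x \<in> sine_polar (sine_polar K)"
    show "x \<in> K"
    proof (rule ccontr)
      assume "x \<notin> K"
      with K have "\<exists>(u, r)\<in>F. \<not> sinbr x u \<le> r"
        by (auto simp: cylinder_def)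
      then obtain u r where ur: "(u, r) \<in> F" "r < sinbr x u"
        by auto
      from F ur(1) have r: "0 < r" .
      have "(1 / r) *\<^sub>R u \<in> sine_polar K"
      proof (unfold sine_polar_def, safe)
        fix y assume "y \<in> K"
        with K ur(1) have "sinbr u y \<le> r" by (auto simp: cylinder_def sinbr_commute)
        with r show "sinbr ((1 / r) *\<^sub>R u) y \<le> 1"
          by (simp add: sinbr_scaleR_left divide_le_eq)
      qed
      with x have "sinbr x ((1 / r) *\<^sub>R u) \<le> 1" by (auto simp: sine_polar_def)
      with ur(2) r show False by (simp add: sinbr_scaleR_right field_simps)
    qed
  qed
qed

section \<open>Polar coordinates\<close>

definition cone_measure :: "'a::euclidean_space measure" where
  "cone_measure = distr (density lborel (indicator (ball 0 1))) borel sgn"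

lemma sets_cone_measure: "sets cone_measure = sets borel"
  by (simp add: cone_measure_def)

lemma emeasure_cone_measure:
  fixes A :: "'a::euclidean_space set"
  assumes A: "A \<in> sets borel"
  shows "emeasure cone_measure A = emeasure lborel {x::'a. sgn x \<in> A \<and> norm x < 1}"
proof -
  have pre: "sgn -` A \<in> sets (borel :: 'a measure)"
    by (rule measurable_sets_borel[OF borel_measurable_sgn A])
  have "emeasure cone_measure A = emeasure (density lborel (indicator (ball (0::'a) 1))) (sgn -` A)"
    unfolding cone_measure_def using A by (subst emeasure_distr) auto
  also have "\<dots> = emeasure lborel (ball 0 1 \<inter> sgn -` A)"
    using pre by (subst emeasure_restricted) auto
  also have "ball 0 1 \<inter> sgn -` A = {x::'a. sgn x \<in> A \<and> norm x < 1}"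
    by auto
  finally show ?thesis .
qed

lemma finite_measure_cone_measure: "finite_measure (cone_measure :: 'a::euclidean_space measure)"
proof (rule finite_measureI)
  have "emeasure (cone_measure :: 'a measure) (space cone_measure)
      = emeasure lborel {x::'a. sgn x \<in> UNIV \<and> norm x < 1}"
    using emeasure_cone_measure[of "UNIV :: 'a set"] by (simp add: cone_measure_def)
  also have "{x::'a. sgn x \<in> UNIV \<and> norm x < 1} = ball 0 1"
    by auto
  finally show "emeasure (cone_measure :: 'a measure) (space cone_measure) \<noteq> \<infinity>"
    by (simp add: emeasure_ball)
qed

lemma sphere_in_null_sets_lborel: "sphere (c::'a::euclidean_space) r \<in> null_sets lborel"
  using negligible_sphere[of c r]
  by (auto simp: null_sets_completion_iff negligible_iff_null_sets negligible_convex_frontier)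

lemma sgn_norm_power_le_eq_scaleR_image:
  fixes A :: "'a::euclidean_space set"
  assumes s: "0 < s"
  shows "{x::'a. sgn x \<in> A \<and> norm x ^ DIM('a) \<le> s ^ DIM('a)}
       = (\<lambda>y. s *\<^sub>R y + 0) ` {y. sgn y \<in> A \<and> norm y \<le> 1}"
proof (intro set_eqI iffI)
  fix x :: 'a assume "x \<in> {x. sgn x \<in> A \<and> norm x ^ DIM('a) \<le> s ^ DIM('a)}"
  then have "sgn x \<in> A" "norm x \<le> s"
    using s power_mono_iff[of "norm x" s "DIM('a)"] by auto
  then have "x /\<^sub>R s \<in> {y. sgn y \<in> A \<and> norm y \<le> 1}"
    using s by (simp add: sgn_scaleR field_simps)
  moreover have "x = s *\<^sub>R (x /\<^sub>R s) + 0" using s by simp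
  ultimately show "x \<in> (\<lambda>y. s *\<^sub>R y + 0) ` {y. sgn y \<in> A \<and> norm y \<le> 1}" by blast
next
  fix x :: 'a assume "x \<in> (\<lambda>y. s *\<^sub>R y + 0) ` {y. sgn y \<in> A \<and> norm y \<le> 1}"
  then obtain y where y: "sgn y \<in> A" "norm y \<le> 1" "x = s *\<^sub>R y" by auto
  then have "norm x \<le> s" using s by (simp add: mult_le_cancel_left1)
  then have "norm x ^ DIM('a) \<le> s ^ DIM('a)" by (metis norm_ge_zero power_mono)
  with y s show "x \<in> {x. sgn x \<in> A \<and> norm x ^ DIM('a) \<le> s ^ DIM('a)}" by (simp add: sgn_scaleR)
qed

lemma emeasure_sgn_norm_power_le:
  fixes A :: "'a::euclidean_space set"
  assumes A[measurable]: "A \<in> sets borel"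
  shows "emeasure lborel {x::'a. sgn x \<in> A \<and> norm x ^ DIM('a) \<le> t}
       = ennreal t * emeasure cone_measure A"
proof (cases "t \<le> 0")
  case True
  have "x = 0" if "norm x ^ DIM('a) \<le> t" for x :: 'a
  proof -
    have "norm x ^ DIM('a) = 0"
      using that True zero_le_power[OF norm_ge_zero, of x "DIM('a)"] by linarith
    then show ?thesis by simp
  qed
  then have "emeasure lborel {x::'a. sgn x \<in> A \<and> norm x ^ DIM('a) \<le> t} \<le> emeasure lborel {0::'a}"
    by (intro emeasure_mono) auto
  with True show ?thesis by (simp add: ennreal_eq_0_iff)
next
  case False
  define C where "C = {y::'a. sgn y \<in> A \<and> norm y \<le> 1}"
  define s where "s = root DIM('a) t"
  have s: "0 < s" "s ^ DIM('a) = t"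
    using False by (auto simp: s_def intro: real_root_pow_pos2)
  have C[measurable]: "C \<in> sets borel"
    unfolding C_def by measurable
  have scaled: "{x::'a. sgn x \<in> A \<and> norm x ^ DIM('a) \<le> t} = (\<lambda>y. s *\<^sub>R y + 0) ` C"
    using sgn_norm_power_le_eq_scaleR_image[OF s(1), of A] by (simp add: s(2) C_def)
  have "emeasure lborel {x::'a. sgn x \<in> A \<and> norm x ^ DIM('a) \<le> t}
      = emeasure lebesgue {x::'a. sgn x \<in> A \<and> norm x ^ DIM('a) \<le> t}"
    by simp
  also have "\<dots> = emeasure lebesgue ((\<lambda>y. s *\<^sub>R y + 0) ` C)"
    by (simp only: scaled)
  also have "\<dots> = ennreal t * emeasure lebesgue C"
    using s by (simp only: emeasure_lebesgue_affine abs_of_pos)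
  also have "emeasure lebesgue C = emeasure lborel {x::'a. sgn x \<in> A \<and> norm x < 1}"
  proof -
    have "C = {x::'a. sgn x \<in> A \<and> norm x < 1} \<union> (C \<inter> sphere 0 1)"
      by (auto simp: C_def less_le)
    then have "emeasure lborel C
        = emeasure lborel ({x::'a. sgn x \<in> A \<and> norm x < 1} \<union> (C \<inter> sphere 0 1))"
      by (rule arg_cong)
    also have "\<dots> = emeasure lborel {x::'a. sgn x \<in> A \<and> norm x < 1}"
      by (rule emeasure_Un_null_set, measurable)
        (rule null_sets_subset[OF sphere_in_null_sets_lborel], auto)
    finally show ?thesis by simp
  qed
  finally show ?thesis by (simp add: emeasure_cone_measure)
qed

lemma measure_eqI_atMost:
  fixes M N :: "real measure"
  assumes sets: "sets M = sets borel" "sets N = sets borel"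
  assumes fin: "\<And>x. emeasure M {..x} < \<infinity>"
  assumes eq: "\<And>x. emeasure M {..x} = emeasure N {..x}"
  shows "M = N"
proof (rule measure_eqI_generator_eq_countable)
  let ?E = "range (\<lambda>a::real. {..a})"
  show "Int_stable ?E"
    by (auto simp: Int_stable_def)
  show "?E \<subseteq> Pow UNIV" "sets M = sigma_sets UNIV ?E" "sets N = sigma_sets UNIV ?E"
    unfolding sets borel_eq_atMost by auto
  show "atMost ` (\<rat> :: real set) \<subseteq> ?E" "\<Union> (atMost ` (\<rat> :: real set)) = UNIV"
    by (auto intro: Rats_no_top_le)
  show "\<And>a. a \<in> atMost ` (\<rat> :: real set) \<Longrightarrow> emeasure M a \<noteq> \<infinity>"
    using fin by (auto simp: less_top)
qed (use eq countable_rat in auto)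

lemma emeasure_sgn_norm_power:
  fixes A :: "'a::euclidean_space set" and B :: "real set"
  assumes A[measurable]: "A \<in> sets borel" and B[measurable]: "B \<in> sets borel"
  shows "emeasure lborel {x::'a. sgn x \<in> A \<and> norm x ^ DIM('a) \<in> B}
       = emeasure cone_measure A * emeasure lborel ({0..} \<inter> B)"
proof -
  define c where "c = emeasure cone_measure A"
  have c: "c < \<infinity>"
    unfolding c_def using finite_measure.emeasure_finite[OF finite_measure_cone_measure]
    by (simp add: less_top)
  have [measurable]: "{x::'a. sgn x \<in> A} \<in> sets borel"
    using measurable_sets_borel[OF borel_measurable_sgn A] by (simp add: vimage_def)
  define Q where
    "Q = distr (density lborel (indicator {x::'a. sgn x \<in> A})) borel (\<lambda>x. norm x ^ DIM('a))"
  define N where "N = density (density lborel (indicator {0::real..})) (\<lambda>_. c)"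
  have emeasure_Q: "emeasure Q X = emeasure lborel {x::'a. sgn x \<in> A \<and> norm x ^ DIM('a) \<in> X}"
    if X[measurable]: "X \<in> sets borel" for X
  proof -
    have "(\<lambda>x::'a. norm x ^ DIM('a)) -` X \<in> sets borel"
      by (rule measurable_sets_borel[OF _ X]) simp
    then have "emeasure Q X = emeasure lborel ({x::'a. sgn x \<in> A} \<inter> (\<lambda>x. norm x ^ DIM('a)) -` X)"
      unfolding Q_def by (simp add: emeasure_distr emeasure_restricted)
    also have "{x::'a. sgn x \<in> A} \<inter> (\<lambda>x. norm x ^ DIM('a)) -` X
        = {x::'a. sgn x \<in> A \<and> norm x ^ DIM('a) \<in> X}" by auto
    finally show ?thesis .
  qed
  have emeasure_N: "emeasure N X = c * emeasure lborel ({0..} \<inter> X)" if "X \<in> sets borel" for X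
    unfolding N_def using that by (simp add: emeasure_density_const emeasure_restricted)
  have atMost: "emeasure Q {..t} = c * ennreal t" "emeasure N {..t} = c * ennreal t" for t :: real
  proof -
    have "{0..} \<inter> {..t} = {0..t}" by auto
    then show "emeasure N {..t} = c * ennreal t"
      by (simp add: emeasure_N emeasure_lborel_Icc_eq ennreal_neg)
    show "emeasure Q {..t} = c * ennreal t"
      by (simp add: emeasure_Q emeasure_sgn_norm_power_le c_def mult.commute)
  qed
  have "Q = N"
  proof (rule measure_eqI_atMost)
    show "sets Q = sets borel" "sets N = sets borel" by (simp_all add: Q_def N_def)
  qed (use atMost c in \<open>simp_all add: ennreal_mult_less_top\<close>)
  then show ?thesis
    using emeasure_Q[OF B] emeasure_N[OF B] by (simp add: c_def)
qed

lemma sigma_finite_measure_density_lborel_indicator: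
  fixes S :: "'a::euclidean_space set"
  assumes "S \<in> sets borel"
  shows "sigma_finite_measure (density lborel (indicator S))"
  using assms
  by (subst sigma_finite_measure.sigma_finite_iff_density_finite[OF sigma_finite_lborel])
    (auto simp: indicator_def)

lemma distr_sgn_norm_power_lborel:
  "distr lborel (borel \<Otimes>\<^sub>M borel) (\<lambda>x::'a::euclidean_space. (sgn x, norm x ^ DIM('a)))
     = cone_measure \<Otimes>\<^sub>M density lborel (indicator {0..})"
proof (rule pair_measure_eqI[symmetric])
  show "sigma_finite_measure (cone_measure :: 'a measure)"
    using finite_measure_cone_measure by (rule finite_measure.axioms(1))
  show "sigma_finite_measure (density lborel (indicator {0::real..}))"
    by (simp add: sigma_finite_measure_density_lborel_indicator)
  show "sets (cone_measure \<Otimes>\<^sub>M density lborel (indicator {0::real..}))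
      = sets (distr lborel (borel \<Otimes>\<^sub>M borel) (\<lambda>x::'a. (sgn x, norm x ^ DIM('a))))"
    by (simp add: sets_cone_measure cong: sets_pair_measure_cong)
  fix A B assume "A \<in> sets (cone_measure :: 'a measure)"
    "B \<in> sets (density lborel (indicator {0::real..}))"
  then have [measurable]: "A \<in> sets borel" "B \<in> sets borel" by (auto simp: sets_cone_measure)
  have "emeasure (distr lborel (borel \<Otimes>\<^sub>M borel) (\<lambda>x::'a. (sgn x, norm x ^ DIM('a)))) (A \<times> B)
      = emeasure lborel {x::'a. sgn x \<in> A \<and> norm x ^ DIM('a) \<in> B}"
    by (subst emeasure_distr) (auto intro!: arg_cong[where f = "emeasure lborel"])
  also have "\<dots> = emeasure cone_measure A * emeasure (density lborel (indicator {0..})) B"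
    by (simp add: emeasure_sgn_norm_power emeasure_restricted)
  finally show "emeasure cone_measure A * emeasure (density lborel (indicator {0..})) B
      = emeasure (distr lborel (borel \<Otimes>\<^sub>M borel) (\<lambda>x::'a. (sgn x, norm x ^ DIM('a)))) (A \<times> B)"
    by simp
qed

lemma emeasure_star_set:
  fixes h :: "'a::euclidean_space \<Rightarrow> real"
  assumes h[measurable]: "h \<in> borel_measurable borel" and h_nonneg: "\<And>u. 0 \<le> h u"
  shows "emeasure lborel {x::'a. norm x ^ DIM('a) \<le> h (sgn x)} = (\<integral>\<^sup>+u. h u \<partial>cone_measure)"
proof -
  define G where "G = {p :: 'a \<times> real. snd p \<le> h (fst p)}"
  have G[measurable]: "G \<in> sets (borel \<Otimes>\<^sub>M borel)"
  proof -
    have "{p \<in> space (borel \<Otimes>\<^sub>M borel). snd p \<le> h (fst p)} \<in> sets (borel \<Otimes>\<^sub>M (borel :: real measure))"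
      by measurable
    then show ?thesis unfolding G_def by (simp add: space_pair_measure)
  qed
  have "emeasure lborel {x::'a. norm x ^ DIM('a) \<le> h (sgn x)}
      = emeasure (distr lborel (borel \<Otimes>\<^sub>M borel) (\<lambda>x::'a. (sgn x, norm x ^ DIM('a)))) G"
    by (subst emeasure_distr[OF _ G]) (auto simp: G_def intro!: arg_cong[where f = "emeasure lborel"])
  also have "\<dots> = emeasure (cone_measure \<Otimes>\<^sub>M density lborel (indicator {0..})) G"
    by (simp only: distr_sgn_norm_power_lborel)
  also have "\<dots> = (\<integral>\<^sup>+u. emeasure (density lborel (indicator {0..})) (Pair u -` G) \<partial>cone_measure)"
    by (rule sigma_finite_measure.emeasure_pair_measure_alt)
      (simp_all add: sigma_finite_measure_density_lborel_indicator sets_cone_measure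
        cong: sets_pair_measure_cong)
  also have "\<dots> = (\<integral>\<^sup>+u. h u \<partial>cone_measure)"
  proof (rule nn_integral_cong)
    fix u
    have "{0..} \<inter> Pair u -` G = {0..h u}" by (auto simp: G_def)
    then show "emeasure (density lborel (indicator {0..})) (Pair u -` G) = ennreal (h u)"
      using h_nonneg[of u] by (simp add: emeasure_restricted)
  qed
  finally show ?thesis .
qed

section \<open>Volume of the sine polar body\<close>

lemma sets_sphere_prob [simp, measurable_cong]: "sets sphere_prob = sets borel"
  by (simp add: sphere_prob_def)

lemma nn_integral_sphere_prob:
  fixes f :: "'a::euclidean_space \<Rightarrow> ennreal"
  assumes [measurable]: "f \<in> borel_measurable borel"
  shows "(\<integral>\<^sup>+u. f u \<partial>sphere_prob)
       = (\<integral>\<^sup>+u. f u \<partial>(cone_measure :: 'a measure)) / ennreal (unit_ball_vol DIM('a))"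
proof -
  have "(\<integral>\<^sup>+u. f u \<partial>sphere_prob) = (\<integral>\<^sup>+x. f (sgn x) \<partial>uniform_measure lborel (ball (0::'a) 1))"
    unfolding sphere_prob_def by (subst nn_integral_distr) auto
  also have "\<dots> = (\<integral>\<^sup>+x. f (sgn x) * indicator (ball 0 1) x \<partial>lborel) / emeasure lborel (ball (0::'a) 1)"
    by (rule nn_integral_uniform_measure) auto
  also have "(\<integral>\<^sup>+x. f (sgn x) * indicator (ball 0 1) x \<partial>lborel)
      = (\<integral>\<^sup>+x. f (sgn x) \<partial>density lborel (indicator (ball (0::'a) 1)))"
    by (subst nn_integral_density) (auto simp: mult.commute intro: borel_measurable_indicator)
  also have "\<dots> = (\<integral>\<^sup>+u. f u \<partial>(cone_measure :: 'a measure))"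
    unfolding cone_measure_def by (subst nn_integral_distr) auto
  also have "emeasure lborel (ball (0::'a) 1) = ennreal (unit_ball_vol DIM('a))"
    by (simp add: emeasure_ball)
  finally show ?thesis .
qed

lemma enn2real_divide_ennreal: "0 < c \<Longrightarrow> enn2real (x / ennreal c) = enn2real x / c"
  by (cases x rule: ennreal_cases) (simp_all add: divide_ennreal ennreal_top_divide)

text \<open>No integrability hypothesis is needed: if the integral is infinite, both sides are 0
  by the junk values of \<open>measure\<close> and of the Bochner integral.\<close>
lemma measure_star_set:
  fixes h :: "'a::euclidean_space \<Rightarrow> real"
  assumes h[measurable]: "h \<in> borel_measurable borel" and h_nonneg: "\<And>u. 0 \<le> h u"
  shows "measure lebesgue {x::'a. norm x ^ DIM('a) \<le> h (sgn x)}
       = unit_ball_vol DIM('a) * (\<integral>u. h u \<partial>sphere_prob)"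
proof -
  define I where "I = (\<integral>\<^sup>+u. ennreal (h u) \<partial>(cone_measure :: 'a measure))"
  have "{x::'a. norm x ^ DIM('a) \<le> h (sgn x)} \<in> sets borel" by measurable
  then have "measure lebesgue {x::'a. norm x ^ DIM('a) \<le> h (sgn x)} = enn2real I"
    by (simp add: measure_def emeasure_star_set[OF h h_nonneg] I_def)
  moreover have "(\<integral>u. h u \<partial>sphere_prob) = enn2real I / unit_ball_vol DIM('a)"
    using h_nonneg
    by (simp add: integral_eq_nn_integral nn_integral_sphere_prob enn2real_divide_ennreal I_def)
  moreover have "unit_ball_vol DIM('a) \<noteq> 0"
    using unit_ball_vol_pos[of "real DIM('a)"] by linarith
  ultimately show ?thesis by simp
qed

lemma sine_polar_eq_star_set:
  fixes S :: "'a::euclidean_space set"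
  assumes "bounded S" "S \<noteq> {}" "\<And>u. u \<noteq> 0 \<Longrightarrow> 0 < cyl_support S u"
  shows "sine_polar S = {x. norm x ^ DIM('a) \<le> 1 / cyl_support S (sgn x) ^ DIM('a)}"
proof (intro set_eqI)
  fix x :: 'a
  show "x \<in> sine_polar S \<longleftrightarrow> x \<in> {x. norm x ^ DIM('a) \<le> 1 / cyl_support S (sgn x) ^ DIM('a)}"
  proof (cases "x = 0")
    case True
    \<comment> \<open>here \<open>sgn x = 0\<close> and \<open>cyl_support S 0 = 0\<close>, so the bound is the junk value \<open>1 / 0 = 0\<close>\<close>
    then show ?thesis
      using cyl_support_nonneg[OF assms(1,2), of 0] by (simp add: sine_polar_def zero_power)
  next
    case False
    define c where "c = cyl_support S (sgn x)"
    have c: "0 < c" using assms(3)[of "sgn x"] False by (simp add: c_def sgn_zero_iff)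
    have "cyl_support S x = norm x * c"
      using cyl_support_scaleR[OF assms(1,2) norm_ge_zero, of x "sgn x"] False
      by (simp add: c_def sgn_div_norm)
    then have "x \<in> sine_polar S \<longleftrightarrow> norm x \<le> 1 / c"
      using c by (simp add: mem_sine_polar_iff[OF assms(1,2)] le_divide_eq)
    also have "\<dots> \<longleftrightarrow> norm x ^ DIM('a) \<le> (1 / c) ^ DIM('a)"
      using c by simp
    finally show ?thesis by (simp add: c_def power_one_over)
  qed
qed

lemma measure_sine_polar:
  fixes S :: "'a::euclidean_space set"
  assumes "DIM('a) \<ge> 2" "bounded S" "ball 0 d \<subseteq> S" "0 < d"
  shows "measure lebesgue (sine_polar S)
       = unit_ball_vol DIM('a) * (\<integral>u. 1 / cyl_support S u ^ DIM('a) \<partial>sphere_prob)"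
proof -
  have "S \<noteq> {}" using assms(3,4) by auto
  have [measurable]: "cyl_support S \<in> borel_measurable borel"
    using continuous_on_cyl_support[OF assms(2) \<open>S \<noteq> {}\<close>] by (rule borel_measurable_continuous_onI)
  have "sine_polar S = {x. norm x ^ DIM('a) \<le> 1 / cyl_support S (sgn x) ^ DIM('a)}"
    using cyl_support_pos[OF assms] by (intro sine_polar_eq_star_set[OF assms(2) \<open>S \<noteq> {}\<close>])
  moreover have "measure lebesgue {x. norm x ^ DIM('a) \<le> 1 / cyl_support S (sgn x) ^ DIM('a)}
      = unit_ball_vol DIM('a) * (\<integral>u. 1 / cyl_support S u ^ DIM('a) \<partial>sphere_prob)"
    by (rule measure_star_set[of "\<lambda>u. 1 / cyl_support S u ^ DIM('a)"])
      (simp_all add: cyl_support_nonneg[OF assms(2) \<open>S \<noteq> {}\<close>])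
  ultimately show ?thesis by simp
qed

lemma omega_eq_unit_ball_vol: "omega n = unit_ball_vol n"
  by (simp add: omega_def unit_ball_vol_def add.commute)

theorem proposition3p9:
  fixes K :: "'a::euclidean_space set"
  assumes "DIM('a) \<ge> 2"
    and "K \<in> cyl_class"
  shows "(\<forall>u. norm u = 1 \<longrightarrow>
            radial_fun (sine_polar K) u * cyl_support K u = 1 \<and>
            radial_fun K u * cyl_support (sine_polar K) u = 1)
       \<and> measure lebesgue (sine_polar K) =
           omega DIM('a) * (\<integral>u. 1 / (cyl_support K u) ^ DIM('a) \<partial>sphere_prob)"
proof -
  from assms(2) obtain F
    where cylinders: "K = (\<Inter>(u, r)\<in>F. cylinder u r)" "\<And>u r. (u, r) \<in> F \<Longrightarrow> 0 < r"
      and "compact K" "convex K" "origin_symmetric K" "interior K \<noteq> {}"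
    by (auto simp: cyl_class_def convex_body_def)
  then have K: "bounded K" by (simp add: compact_imp_bounded)
  obtain d where d: "0 < d" "ball 0 d \<subseteq> K"
    using origin_symmetric_convex_contains_ball[OF \<open>convex K\<close> \<open>origin_symmetric K\<close>
        \<open>interior K \<noteq> {}\<close>] .
  obtain e where e: "0 < e" "ball 0 e \<subseteq> sine_polar K"
    using sine_polar_contains_ball[OF K] .
  have polar: "bounded (sine_polar K)"
    using bounded_sine_polar[OF assms(1) d(2,1)] .
  have "radial_fun (sine_polar K) u * cyl_support K u = 1 \<and>
        radial_fun K u * cyl_support (sine_polar K) u = 1" if "norm u = 1" for u
  proof
    from that have "u \<noteq> 0" by auto
    show "radial_fun (sine_polar K) u * cyl_support K u = 1"
      using radial_fun_sine_polar_mult_cyl_support[OF assms(1) K d(2,1) \<open>u \<noteq> 0\<close>] .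
    show "radial_fun K u * cyl_support (sine_polar K) u = 1"
      using radial_fun_sine_polar_mult_cyl_support[OF assms(1) polar e(2,1) \<open>u \<noteq> 0\<close>]
      by (simp add: sine_polar_sine_polar_cylinders[OF cylinders])
  qed
  moreover have "measure lebesgue (sine_polar K) =
      omega DIM('a) * (\<integral>u. 1 / (cyl_support K u) ^ DIM('a) \<partial>sphere_prob)"
    using measure_sine_polar[OF assms(1) K d(2,1)] by (simp add: omega_eq_unit_ball_vol)
  ultimately show ?thesis by blast
qed

end
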